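(* Let $G$ be a graph and let $\mathcal{P} = \{V_1,\dots,V_k\}$ be a partition of $V(G)$ such that $|V_i| > 2\Delta(G)$ for all $i \in [k-1]$. Then for any $v_k, v_k' \in V_k$ there exists an independent transversal $T$ of $\{V_1,\dots,V_{k-1}\}$ such that both $T \cup \{v_k\}$ and $T\cup\{v_k'\}$ are independent transversals of $\mathcal{P}$.
   Context: Given a graph $G$ and a collection $\mathcal{Q}=\{W_1,\dots,W_m\}$ of pairwise disjoint subsets of $V(G)$: a transversal of $\mathcal{Q}$ is a set $S \subseteq \bigcup_i W_i$ with $|S \cap W_i| = 1$ for every $i\in[m]$; an independent transversal of $\mathcal{Q}$ is a transversal of $\mathcal{Q}$ that is an independent set in $G$. $\Delta(G)$ is the maximum degree of $G$. *)

theory Defs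
  imports Main
begin

definition graph :: "'a set \<Rightarrow> ('a \<Rightarrow> 'a \<Rightarrow> bool) \<Rightarrow> bool" where
  "graph V E \<longleftrightarrow> finite V \<and> (\<forall>u v. E u v \<longrightarrow> u \<in> V \<and> v \<in> V)
     \<and> (\<forall>u v. E u v \<longrightarrow> E v u) \<and> (\<forall>v. \<not> E v v)"

definition degree :: "'a set \<Rightarrow> ('a \<Rightarrow> 'a \<Rightarrow> bool) \<Rightarrow> 'a \<Rightarrow> nat" where
  "degree V E v = card {u \<in> V. E v u}"

definition max_degree :: "'a set \<Rightarrow> ('a \<Rightarrow> 'a \<Rightarrow> bool) \<Rightarrow> nat" where
  "max_degree V E = Max (insert 0 (degree V E ` V))"

definition independent :: "('a \<Rightarrow> 'a \<Rightarrow> bool) \<Rightarrow> 'a set \<Rightarrow> bool" where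
  "independent E S \<longleftrightarrow> (\<forall>u\<in>S. \<forall>v\<in>S. \<not> E u v)"

definition transversal :: "(nat \<Rightarrow> 'a set) \<Rightarrow> nat set \<Rightarrow> 'a set \<Rightarrow> bool" where
  "transversal W I S \<longleftrightarrow> S \<subseteq> (\<Union>i\<in>I. W i) \<and> (\<forall>i\<in>I. card (S \<inter> W i) = 1)"

definition indep_transversal ::
  "('a \<Rightarrow> 'a \<Rightarrow> bool) \<Rightarrow> (nat \<Rightarrow> 'a set) \<Rightarrow> nat set \<Rightarrow> 'a set \<Rightarrow> bool" where
  "indep_transversal E W I S \<longleftrightarrow> transversal W I S \<and> independent E S"

definition is_partition :: "'a set \<Rightarrow> (nat \<Rightarrow> 'a set) \<Rightarrow> nat \<Rightarrow> bool" where
  "is_partition V P k \<longleftrightarrow> (\<Union>i\<in>{1..k}. P i) = V \<and> (\<forall>i\<in>{1..k}. P i \<noteq> {})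
     \<and> (\<forall>i\<in>{1..k}. \<forall>j\<in>{1..k}. i \<noteq> j \<longrightarrow> P i \<inter> P j = {})"

end

theory Submission imports Defs begin

text \<open>
  Delete the at most \<open>2\<Delta>\<close> neighbours of \<open>v\<close> and \<open>v'\<close> from \<open>V\<^sub>1, \<dots>, V\<^sub>k\<^sub>-\<^sub>1\<close>. The truncated
  parts still satisfy Haxell's condition: a set \<open>D\<close> of at most \<open>2|S| - 2\<close> vertices dominates
  at most \<open>(2|S| - 2)\<Delta>\<close> vertices, fewer than the \<open>|S|(2\<Delta> + 1) - 2\<Delta>\<close> left in any \<open>|S|\<close> parts.
  An independent transversal of the truncated parts then extends by \<open>v\<close> and by \<open>v'\<close>.

  Haxell's theorem is proved by induction on the number of parts. Given an independent
  transversal \<open>M\<close> of all parts but \<open>W a\<close>, grow an alternating tree: the condition yields a vertex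
  \<open>x\<close> in the parts reached so far that is not adjacent to the tree. If \<open>x\<close> has a neighbour
  \<open>y \<in> M\<close>, add the pair \<open>(x, y)\<close>; otherwise \<open>x\<close> lies in \<open>W a\<close> and can be added to \<open>M\<close>, or it
  replaces the vertex of \<open>M\<close> in its part, which frees the tree vertex that this vertex blocked.
  The sequence of numbers of \<open>M\<close>-neighbours of the tree vertices decreases lexicographically,
  so the process terminates.
\<close>

lemma independent_insert:
  assumes "\<And>u v. E u v \<Longrightarrow> E v u"
  shows "independent E (insert w T) \<longleftrightarrow> independent E T \<and> \<not> E w w \<and> (\<forall>u\<in>T. \<not> E w u)"
  using assms unfolding independent_def by blast

lemma transversal_part:
  assumes "transversal W I T" "i \<in> I"
  obtains t where "T \<inter> W i = {t}"
  using assms unfolding transversal_def by (meson card_1_singletonE)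

lemma transversal_insert:
  assumes T: "transversal W I T" and w: "w \<in> W a"
    and disj: "\<And>i. i \<in> I \<Longrightarrow> W a \<inter> W i = {}"
  shows "transversal W (insert a I) (insert w T)"
  unfolding transversal_def
proof (intro conjI ballI)
  show "insert w T \<subseteq> (\<Union>i\<in>insert a I. W i)"
    using T w unfolding transversal_def by blast
  fix i assume i: "i \<in> insert a I"
  show "card (insert w T \<inter> W i) = 1"
  proof (cases "i \<in> I")
    case True
    then have "insert w T \<inter> W i = T \<inter> W i" using disj w by blast
    then show ?thesis using T True unfolding transversal_def by simp
  next
    case False
    then have "i = a" using i by blast
    moreover have "T \<inter> W a = {}" using T disj unfolding transversal_def by blast
    ultimately have "insert w T \<inter> W i = {w}" using w by blast
    then show ?thesis by simp
  qed
qed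

lemma indep_transversal_insert:
  assumes sym: "\<And>u v. E u v \<Longrightarrow> E v u" and irrefl: "\<And>v. \<not> E v v"
    and T: "indep_transversal E W I T" and w: "w \<in> W a" "\<forall>u\<in>T. \<not> E w u"
    and disj: "\<And>i. i \<in> I \<Longrightarrow> W a \<inter> W i = {}"
  shows "indep_transversal E W (insert a I) (insert w T)"
proof -
  have "transversal W (insert a I) (insert w T)"
    using T w(1) disj transversal_insert[of W I T w a] unfolding indep_transversal_def by blast
  moreover have "independent E (insert w T)"
    using T w(2) irrefl by (simp add: indep_transversal_def independent_insert[OF sym])
  ultimately show ?thesis unfolding indep_transversal_def by blast
qed

lemma transversal_swap:
  assumes T: "transversal W I T" and c: "c \<in> I" and y: "y \<in> T" "y \<in> W c" and z: "z \<in> W c"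
    and disj: "\<And>i. i \<in> I \<Longrightarrow> i \<noteq> c \<Longrightarrow> W c \<inter> W i = {}"
  shows "transversal W I (insert z (T - {y}))"
  unfolding transversal_def
proof (intro conjI ballI)
  show "insert z (T - {y}) \<subseteq> (\<Union>i\<in>I. W i)"
    using T c z unfolding transversal_def by blast
  fix i assume i: "i \<in> I"
  show "card (insert z (T - {y}) \<inter> W i) = 1"
  proof (cases "i = c")
    case True
    obtain t where "T \<inter> W c = {t}" using transversal_part[OF T c] .
    then have "T \<inter> W c = {y}" using y by (metis IntI singletonD)
    then have "insert z (T - {y}) \<inter> W i = {z}" using True z by blast
    then show ?thesis by simp
  next
    case False
    then have "insert z (T - {y}) \<inter> W i = T \<inter> W i" using disj[OF i] y z by blast
    then show ?thesis using T i unfolding transversal_def by simp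
  qed
qed

lemma transversal_enlarge_parts:
  assumes T: "transversal W I T" and sub: "\<And>i. i \<in> I \<Longrightarrow> W i \<subseteq> P i"
    and disj: "\<And>i j. i \<in> I \<Longrightarrow> j \<in> I \<Longrightarrow> i \<noteq> j \<Longrightarrow> P i \<inter> P j = {}"
  shows "transversal P I T"
  unfolding transversal_def
proof (intro conjI ballI)
  show "T \<subseteq> (\<Union>i\<in>I. P i)" using T sub unfolding transversal_def by blast
  fix i assume i: "i \<in> I"
  have "T \<inter> P i = T \<inter> W i"
  proof
    show "T \<inter> P i \<subseteq> T \<inter> W i"
    proof
      fix t assume t: "t \<in> T \<inter> P i"
      then obtain j where "j \<in> I" "t \<in> W j" using T unfolding transversal_def by blast
      then show "t \<in> T \<inter> W i" using t disj[OF i, of j] sub by blast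
    qed
  qed (use sub i in blast)
  then show "card (T \<inter> P i) = 1" using T i unfolding transversal_def by simp
qed

lemma card_le_card_parts_met:
  assumes T: "transversal W I T" and "finite I" and "Y \<subseteq> T"
  shows "card Y \<le> card {i \<in> I. \<exists>y\<in>Y. y \<in> W i}"
proof -
  let ?J = "{i \<in> I. \<exists>y\<in>Y. y \<in> W i}"
  have fin: "finite ?J" using \<open>finite I\<close> by simp
  have one: "\<And>i. i \<in> ?J \<Longrightarrow> card (T \<inter> W i) = 1" using T unfolding transversal_def by blast
  have "finite (T \<inter> W i)" if "i \<in> ?J" for i
    using one[OF that] by (metis card.infinite zero_neq_one)
  with fin have "finite (\<Union>i\<in>?J. T \<inter> W i)" by (rule finite_UN_I)
  moreover have "Y \<subseteq> (\<Union>i\<in>?J. T \<inter> W i)"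
    using T \<open>Y \<subseteq> T\<close> unfolding transversal_def by blast
  ultimately have "card Y \<le> card (\<Union>i\<in>?J. T \<inter> W i)"
    by (rule card_mono)
  also have "\<dots> \<le> (\<Sum>i\<in>?J. card (T \<inter> W i))" using fin by (rule card_UN_le)
  also have "\<dots> = card ?J" using one by simp
  finally show ?thesis .
qed

definition lex_below :: "nat list \<Rightarrow> nat list \<Rightarrow> bool" where
  "lex_below v w \<longleftrightarrow> (\<exists>i < length v. i < length w \<and> (\<forall>l<i. v!l \<le> w!l) \<and> v!i < w!i)"

lemma lex_below_mono:
  assumes "lex_below v u" "length u \<le> length w" "\<forall>l<length u. u!l \<le> w!l"
  shows "lex_below v w"
proof -
  obtain i where i: "i < length v" "i < length u" "\<forall>l<i. v!l \<le> u!l" "v!i < u!i"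
    using assms(1) unfolding lex_below_def by blast
  then have "\<forall>l<i. v!l \<le> w!l" "v!i < w!i"
    using assms(3) by (auto intro: order.trans less_le_trans)
  then show ?thesis unfolding lex_below_def using i(1,2) assms(2) by auto
qed

lemma lex_below_append: "lex_below v w \<Longrightarrow> lex_below (v @ p) (w @ q)"
  unfolding lex_below_def by (auto simp: nth_append)

lemma lex_below_imp_lex:
  assumes "lex_below v w" "length v = length w"
  shows "(v, w) \<in> lex less_than"
proof -
  obtain i where i: "i < length v" "\<forall>l<i. v!l \<le> w!l" "v!i < w!i"
    using assms(1) unfolding lex_below_def by blast
  define l where "l = (LEAST l. l < length v \<and> v!l \<noteq> w!l)"
  have l: "l < length v" "v!l \<noteq> w!l" "l \<le> i"
    using LeastI[of "\<lambda>l. l < length v \<and> v!l \<noteq> w!l" i] Least_le[of _ i] i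
    unfolding l_def by auto
  have "v!l' = w!l'" if "l' < l" for l'
    using not_less_Least[OF that[unfolded l_def]] that l(1) by simp
  then have "take l v = take l w"
    using l(1) assms(2) by (intro nth_equalityI) simp_all
  moreover have "v!l < w!l"
  proof -
    have "v!l \<le> w!l" using i(2,3) l(3) by (cases "l = i") auto
    then show ?thesis using l(2) by simp
  qed
  moreover have "v = take l v @ v!l # drop (Suc l) v" "w = take l w @ w!l # drop (Suc l) w"
    using l(1) assms(2) by (simp_all add: id_take_nth_drop)
  ultimately show ?thesis
    unfolding lex_conv using assms(2) by fastforce
qed

text \<open>Haxell's condition; \<open>card D + 2 \<le> 2 * card S\<close> encodes \<open>|D| \<le> 2|S| - 2\<close> without
  truncated subtraction.\<close>
definition haxell_condition :: "('a \<Rightarrow> 'a \<Rightarrow> bool) \<Rightarrow> (nat \<Rightarrow> 'a set) \<Rightarrow> nat set \<Rightarrow> bool" where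
  "haxell_condition E W I \<longleftrightarrow> (\<forall>S D. S \<subseteq> I \<longrightarrow> S \<noteq> {} \<longrightarrow> finite D \<longrightarrow> card D + 2 \<le> 2 * card S
     \<longrightarrow> (\<exists>x\<in>(\<Union>i\<in>S. W i). \<forall>d\<in>D. \<not> E x d))"

lemma haxell_condition_subset:
  "haxell_condition E W I \<Longrightarrow> J \<subseteq> I \<Longrightarrow> haxell_condition E W J"
  unfolding haxell_condition_def by (meson subset_trans)

locale transversal_extension =
  fixes E :: "'a \<Rightarrow> 'a \<Rightarrow> bool" and W :: "nat \<Rightarrow> 'a set" and I :: "nat set" and a :: nat
  assumes sym: "\<And>u v. E u v \<Longrightarrow> E v u"
    and irrefl: "\<And>v. \<not> E v v"
    and finite_I: "finite I"
    and a_notin_I: "a \<notin> I"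
    and finite_parts: "\<And>i. i \<in> insert a I \<Longrightarrow> finite (W i)"
    and disjoint_parts: "\<And>i j. i \<in> insert a I \<Longrightarrow> j \<in> insert a I \<Longrightarrow> i \<noteq> j \<Longrightarrow> W i \<inter> W j = {}"
    and haxell: "haxell_condition E W (insert a I)"
begin

definition reached :: "'a list \<Rightarrow> nat set" where
  "reached ys = insert a {j \<in> I. \<exists>y\<in>set ys. y \<in> W j}"

text \<open>The tree is stored as the lists \<open>xs = [x\<^sub>0, \<dots>]\<close> and \<open>ys = [y\<^sub>0, \<dots>]\<close>, where \<open>x\<^sub>i\<close> lies in
  \<open>W a\<close> or in the part of some earlier \<open>y\<^sub>l\<close>, and \<open>y\<^sub>i \<in> M\<close> is a neighbour blocking \<open>x\<^sub>i\<close>.\<close>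
definition alt_tree :: "'a set \<Rightarrow> 'a list \<Rightarrow> 'a list \<Rightarrow> bool" where
  "alt_tree M xs ys \<longleftrightarrow> indep_transversal E W I M \<and> length xs = length ys \<and>
     (\<forall>i<length ys. ys!i \<in> M \<and> E (xs!i) (ys!i) \<and> xs!i \<in> (\<Union>j\<in>reached (take i ys). W j) \<and>
        (\<forall>l<i. \<not> E (xs!i) (xs!l) \<and> \<not> E (xs!i) (ys!l)))"

definition conflicts :: "'a set \<Rightarrow> 'a \<Rightarrow> nat" where
  "conflicts M x = card {y \<in> M. E x y}"

lemma alt_tree_nth:
  "alt_tree M xs ys \<Longrightarrow> i < length ys \<Longrightarrow> ys!i \<in> M \<and> E (xs!i) (ys!i) \<and>
     xs!i \<in> (\<Union>j\<in>reached (take i ys). W j) \<and> (\<forall>l<i. \<not> E (xs!i) (xs!l) \<and> \<not> E (xs!i) (ys!l))"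
  unfolding alt_tree_def by (elim conjE allE) (erule mp)

lemma alt_tree_indep_transversal: "alt_tree M xs ys \<Longrightarrow> indep_transversal E W I M"
  unfolding alt_tree_def by (elim conjE)

lemma alt_tree_length: "alt_tree M xs ys \<Longrightarrow> length xs = length ys"
  unfolding alt_tree_def by (elim conjE)

lemma alt_tree_take:
  assumes "alt_tree M xs ys" "j \<le> length ys" "indep_transversal E W I M'" "\<forall>l<j. ys!l \<in> M'"
  shows "alt_tree M' (take j xs) (take j ys)"
  using assms unfolding alt_tree_def by (auto simp: min_def)

lemma alt_tree_snoc:
  assumes tree: "alt_tree M xs ys" and y: "y \<in> M" "E z y" and z: "z \<in> (\<Union>j\<in>reached ys. W j)"
    and z_free: "\<forall>d\<in>set xs \<union> set ys. \<not> E z d"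
  shows "alt_tree M (xs @ [z]) (ys @ [y])"
proof -
  have len: "length xs = length ys" using alt_tree_length[OF tree] .
  have "\<forall>l<length ys. \<not> E z (xs!l) \<and> \<not> E z (ys!l)" using z_free len by auto
  then show ?thesis
    using tree y z len unfolding alt_tree_def
    by (auto simp: nth_append less_Suc_eq)
qed

lemma alt_tree_distinct: "alt_tree M xs ys \<Longrightarrow> distinct ys"
  unfolding distinct_conv_nth by (metis alt_tree_nth linorder_neqE_nat)

lemma finite_all_parts: "finite (\<Union>i\<in>insert a I. W i)"
  using finite_I finite_parts by blast

lemma indep_transversal_subset_parts: "indep_transversal E W I M \<Longrightarrow> M \<subseteq> (\<Union>i\<in>insert a I. W i)"
  unfolding indep_transversal_def transversal_def by auto

lemma alt_tree_card:
  assumes tree: "alt_tree M xs ys"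
  shows "card (set xs \<union> set ys) + 2 \<le> 2 * card (reached ys)"
    and "length ys < card (insert a I)"
proof -
  let ?J = "{j \<in> I. \<exists>y\<in>set ys. y \<in> W j}"
  have M: "transversal W I M" and "set ys \<subseteq> M"
    using tree unfolding alt_tree_def indep_transversal_def by (auto simp: in_set_conv_nth)
  then have ys: "card (set ys) \<le> card ?J"
    using card_le_card_parts_met finite_I by blast
  have "card (set xs) \<le> card (set ys)"
    using card_length[of xs] tree distinct_card[OF alt_tree_distinct[OF tree]]
    unfolding alt_tree_def by simp
  then have "card (set xs \<union> set ys) \<le> 2 * card ?J" using ys card_Un_le[of "set xs" "set ys"] by simp
  moreover have "card (reached ys) = Suc (card ?J)"
    unfolding reached_def using finite_I a_notin_I by simp
  ultimately show "card (set xs \<union> set ys) + 2 \<le> 2 * card (reached ys)" by simp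
  have "card ?J \<le> card I" using finite_I by (intro card_mono) auto
  then show "length ys < card (insert a I)"
    using ys distinct_card[OF alt_tree_distinct[OF tree]] finite_I a_notin_I by simp
qed

lemma alt_tree_swap:
  assumes tree: "alt_tree M xs ys" and j: "j < length ys"
    and c: "c \<in> I" "ys!j \<in> W c" "z \<in> W c"
    and z_free: "\<forall>d\<in>set xs \<union> set ys. \<not> E z d" "\<forall>y\<in>M. \<not> E z y"
  defines "M' \<equiv> insert z (M - {ys!j})"
  shows "alt_tree M' (take j xs) (take j ys)"
    and "\<And>l. l < length ys \<Longrightarrow> conflicts M' (xs!l) \<le> conflicts M (xs!l)"
    and "conflicts M' (xs!j) < conflicts M (xs!j)"
proof -
  have M: "indep_transversal E W I M" and len: "length xs = length ys"
    using alt_tree_indep_transversal[OF tree] alt_tree_length[OF tree] .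
  have finite_M: "finite M"
    using indep_transversal_subset_parts[OF M] finite_all_parts finite_subset by blast
  note tree_j = alt_tree_nth[OF tree j]
  have "transversal W I M'"
    unfolding M'_def using M tree_j c disjoint_parts
    by (intro transversal_swap[of W I M c]) (auto simp: indep_transversal_def)
  moreover have "independent E M'"
    unfolding M'_def using M z_free(2) irrefl sym
    by (auto simp: indep_transversal_def independent_insert[OF sym] independent_def)
  ultimately have M': "indep_transversal E W I M'" unfolding indep_transversal_def by blast
  have "ys!l \<in> M'" if "l < j" for l
    using alt_tree_nth[OF tree] alt_tree_distinct[OF tree] that j
    unfolding M'_def by (auto simp: nth_eq_iff_index_eq)
  then show "alt_tree M' (take j xs) (take j ys)"
    using alt_tree_take[OF tree _ M'] j by simp
  have z_xs: "\<not> E (xs!l) z" if "l < length ys" for l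
    using z_free(1) len sym that by (metis UnI1 nth_mem)
  then have sub: "{u \<in> M'. E (xs!l) u} \<subseteq> {u \<in> M. E (xs!l) u}" if "l < length ys" for l
    using that unfolding M'_def by auto
  then show "conflicts M' (xs!l) \<le> conflicts M (xs!l)" if "l < length ys" for l
    unfolding conflicts_def using finite_M that by (intro card_mono) auto
  have "ys!j \<in> {u \<in> M. E (xs!j) u}" "ys!j \<notin> {u \<in> M'. E (xs!j) u}"
    using tree_j z_xs[OF j] unfolding M'_def by auto
  then show "conflicts M' (xs!j) < conflicts M (xs!j)"
    unfolding conflicts_def using sub[OF j] finite_M by (intro psubset_card_mono) auto
qed

abbreviation extensible :: bool where
  "extensible \<equiv> \<exists>T. indep_transversal E W (insert a I) T"

lemma alt_tree_free_vertex:
  assumes "alt_tree M xs ys" "z \<in> (\<Union>j\<in>reached ys. W j)"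
    and "\<forall>d\<in>set xs \<union> set ys. \<not> E z d" "\<forall>y\<in>M. \<not> E z y"
  shows "extensible \<or>
    (\<exists>M2 xs2 ys2. alt_tree M2 xs2 ys2 \<and> lex_below (map (conflicts M2) xs2) (map (conflicts M) xs))"
  using assms
proof (induction "length ys" arbitrary: M xs ys z rule: less_induct)
  case less
  note tree = less.prems(1) and z_free = less.prems(3,4)
  have M: "indep_transversal E W I M" and len: "length xs = length ys"
    using alt_tree_indep_transversal[OF tree] alt_tree_length[OF tree] .
  obtain c where c: "c \<in> reached ys" "z \<in> W c" using less.prems(2) by blast
  show ?case
  proof (cases "c = a")
    case True
    have "indep_transversal E W (insert a I) (insert z M)"
      using c(2) disjoint_parts a_notin_I unfolding True
      by (intro indep_transversal_insert[OF sym irrefl M _ z_free(2)]) auto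
    then show ?thesis by blast
  next
    case False
    then obtain j where j: "c \<in> I" "j < length ys" "ys!j \<in> W c"
      using c unfolding reached_def by (auto simp: in_set_conv_nth)
    define M' where "M' = insert z (M - {ys!j})"
    note swap = alt_tree_swap[OF tree j(2,1,3) c(2) z_free, folded M'_def]
    have below_j: "\<forall>l<j. conflicts M' (xs!l) \<le> conflicts M (xs!l)"
      using swap(2) j(2) by simp
    have x_j: "xs!j \<in> (\<Union>i\<in>reached (take j ys). W i)"
      "\<forall>d\<in>set (take j xs) \<union> set (take j ys). \<not> E (xs!j) d"
      using alt_tree_nth[OF tree j(2)] j(2) len by (auto simp: in_set_conv_nth)
    show ?thesis
    proof (cases "\<exists>y\<in>M'. E (xs!j) y")
      case True
      then obtain y where y: "y \<in> M'" "E (xs!j) y" by blast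
      have "alt_tree M' (take j xs @ [xs!j]) (take j ys @ [y])"
        by (rule alt_tree_snoc[OF swap(1) y x_j])
      moreover have "lex_below (map (conflicts M') (take j xs @ [xs!j])) (map (conflicts M) xs)"
        unfolding lex_below_def using below_j swap(3) j(2) len
        by (intro exI[of _ j]) (simp add: nth_append)
      ultimately show ?thesis by blast
    next
      case False
      then have "extensible \<or> (\<exists>M2 xs2 ys2. alt_tree M2 xs2 ys2 \<and>
          lex_below (map (conflicts M2) xs2) (map (conflicts M') (take j xs)))"
        using less.hyps[OF _ swap(1) x_j] j(2) by auto
      moreover have "lex_below v (map (conflicts M) xs)"
        if "lex_below v (map (conflicts M') (take j xs))" for v
        using that by (rule lex_below_mono) (use below_j j(2) len in simp_all)
      ultimately show ?thesis by blast
    qed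
  qed
qed

text \<open>Padding the conflict counts to a common length with a value exceeding every count makes
  growing the tree a decrease as well, so that \<open>lex\<close> yields a well-founded potential.\<close>
definition potential :: "'a set \<Rightarrow> 'a list \<Rightarrow> nat list" where
  "potential M xs = map (conflicts M) xs
     @ replicate (card (insert a I) - length xs) (Suc (card (\<Union>i\<in>insert a I. W i)))"

lemma conflicts_bounded:
  assumes "alt_tree M xs ys"
  shows "conflicts M x < Suc (card (\<Union>i\<in>insert a I. W i))"
proof -
  have "indep_transversal E W I M" using alt_tree_indep_transversal[OF assms] .
  then have "conflicts M x \<le> card M" "card M \<le> card (\<Union>i\<in>insert a I. W i)"
    unfolding conflicts_def
    using indep_transversal_subset_parts finite_all_parts finite_subset
    by (metis (no_types, lifting) card_mono mem_Collect_eq subsetI)+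
  then show ?thesis by simp
qed

lemma length_potential: "alt_tree M xs ys \<Longrightarrow> length (potential M xs) = card (insert a I)"
  using alt_tree_card(2)[of M xs ys] unfolding alt_tree_def potential_def by simp

lemma alt_tree_improve:
  assumes tree: "alt_tree M xs ys"
  shows "extensible \<or> (\<exists>M2 xs2 ys2. alt_tree M2 xs2 ys2 \<and> (potential M2 xs2, potential M xs) \<in> lex less_than)"
proof -
  have "reached ys \<subseteq> insert a I" "reached ys \<noteq> {}" unfolding reached_def by auto
  then obtain z where z: "z \<in> (\<Union>j\<in>reached ys. W j)" and z_free: "\<forall>d\<in>set xs \<union> set ys. \<not> E z d"
    using haxell alt_tree_card(1)[OF tree] unfolding haxell_condition_def by (meson List.finite_set finite_Un)
  show ?thesis
  proof (cases "\<exists>y\<in>M. E z y")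
    case True
    then obtain y where y: "y \<in> M" "E z y" by blast
    have tree': "alt_tree M (xs @ [z]) (ys @ [y])" by (rule alt_tree_snoc[OF tree y z z_free])
    have "length xs < card (insert a I)"
      using alt_tree_card(2)[OF tree'] alt_tree_length[OF tree] by simp
    then have "lex_below (potential M (xs @ [z])) (potential M xs)"
      unfolding lex_below_def using conflicts_bounded[OF tree']
      by (intro exI[of _ "length xs"]) (auto simp: potential_def nth_append)
    then have "(potential M (xs @ [z]), potential M xs) \<in> lex less_than"
      using lex_below_imp_lex length_potential[OF tree'] length_potential[OF tree] by simp
    then show ?thesis using tree' by blast
  next
    case False
    then consider "extensible"
      | M2 xs2 ys2 where "alt_tree M2 xs2 ys2" "lex_below (map (conflicts M2) xs2) (map (conflicts M) xs)"
      using alt_tree_free_vertex[OF tree z z_free] by blast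
    then show ?thesis
    proof cases
      case (2 M2 xs2 ys2)
      then have "lex_below (potential M2 xs2) (potential M xs)"
        unfolding potential_def using lex_below_append by blast
      then have "(potential M2 xs2, potential M xs) \<in> lex less_than"
        using lex_below_imp_lex length_potential[OF 2(1)] length_potential[OF tree] by simp
      then show ?thesis using 2(1) by blast
    qed simp
  qed
qed

lemma alt_tree_extensible: "alt_tree M xs ys \<Longrightarrow> extensible"
proof (induction "potential M xs" arbitrary: M xs ys rule: wf_induct_rule[OF wf_lex[OF wf_less_than]])
  case (1 M xs ys)
  from alt_tree_improve[OF 1(2)] show ?case
  proof
    assume "\<exists>M2 xs2 ys2. alt_tree M2 xs2 ys2 \<and> (potential M2 xs2, potential M xs) \<in> lex less_than"
    then obtain M2 xs2 ys2
      where "alt_tree M2 xs2 ys2" "(potential M2 xs2, potential M xs) \<in> lex less_than" by blast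
    then show ?case using 1(1) by blast
  qed
qed

lemma extend_indep_transversal: "indep_transversal E W I M \<Longrightarrow> extensible"
  by (rule alt_tree_extensible[of M "[]" "[]"]) (simp add: alt_tree_def)

end

theorem haxell_indep_transversal:
  assumes sym: "\<And>u v. E u v \<Longrightarrow> E v u" and irrefl: "\<And>v. \<not> E v v"
    and "finite I" "\<And>i. i \<in> I \<Longrightarrow> finite (W i)"
    and "\<And>i j. i \<in> I \<Longrightarrow> j \<in> I \<Longrightarrow> i \<noteq> j \<Longrightarrow> W i \<inter> W j = {}"
    and "haxell_condition E W I"
  shows "\<exists>T. indep_transversal E W I T"
  using assms(3-)
proof (induction I rule: finite_induct)
  case empty
  have "indep_transversal E W {} {}"
    by (simp add: indep_transversal_def transversal_def independent_def)
  then show ?case by blast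
next
  case (insert a I)
  interpret transversal_extension E W I a
    by (rule transversal_extension.intro) (fact sym irrefl insert.hyps insert.prems)+
  have "\<exists>M. indep_transversal E W I M"
  proof (rule insert.IH)
    show "\<And>i. i \<in> I \<Longrightarrow> finite (W i)" using insert.prems(1) by blast
    show "\<And>i j. i \<in> I \<Longrightarrow> j \<in> I \<Longrightarrow> i \<noteq> j \<Longrightarrow> W i \<inter> W j = {}"
      using insert.prems(2) by blast
    show "haxell_condition E W I" using insert.prems(3) by (rule haxell_condition_subset) blast
  qed
  then show ?case using extend_indep_transversal by blast
qed

lemma card_neighbours_le_max_degree:
  assumes "graph V E"
  shows "card {u \<in> V. E d u} \<le> max_degree V E"
proof (cases "d \<in> V")
  case True
  then show ?thesis
    using assms unfolding graph_def max_degree_def degree_def by (intro Max_ge) auto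
next
  case False
  then have "{u \<in> V. E d u} = {}" using assms unfolding graph_def by blast
  then show ?thesis by (metis card.empty le0)
qed

lemma card_two_neighbourhoods_le:
  assumes "graph V E"
  shows "card ({u \<in> V. E v u} \<union> {u \<in> V. E w u}) \<le> 2 * max_degree V E"
proof -
  have "card ({u \<in> V. E v u} \<union> {u \<in> V. E w u}) \<le> card {u \<in> V. E v u} + card {u \<in> V. E w u}"
    by (rule card_Un_le)
  then show ?thesis
    using card_neighbours_le_max_degree[OF assms, of v] card_neighbours_le_max_degree[OF assms, of w]
    by linarith
qed

lemma exists_non_neighbour:
  assumes G: "graph V E" and "finite D" and "card D * max_degree V E < card A"
  shows "\<exists>x\<in>A. \<forall>d\<in>D. \<not> E x d"
proof (rule ccontr)
  assume "\<not> ?thesis"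
  moreover have "E d x \<and> x \<in> V" if "E x d" for x d
    using G that unfolding graph_def by blast
  ultimately have "A \<subseteq> (\<Union>d\<in>D. {u \<in> V. E d u})" by blast
  moreover have "finite (\<Union>d\<in>D. {u \<in> V. E d u})"
    using G \<open>finite D\<close> unfolding graph_def by simp
  ultimately have "card A \<le> card (\<Union>d\<in>D. {u \<in> V. E d u})" by (rule card_mono[rotated])
  also have "\<dots> \<le> (\<Sum>d\<in>D. card {u \<in> V. E d u})" using \<open>finite D\<close> by (rule card_UN_le)
  also have "\<dots> \<le> card D * max_degree V E"
    using sum_bounded_above[of D _ "max_degree V E"] card_neighbours_le_max_degree[OF G] by simp
  finally show False using assms(3) by simp
qed

lemma haxell_condition_large_parts:
  fixes E :: "'a \<Rightarrow> 'a \<Rightarrow> bool"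
  assumes G: "graph V E" and large: "\<forall>i\<in>I. 2 * max_degree V E < card (P i)"
    and disj: "\<And>i j. i \<in> I \<Longrightarrow> j \<in> I \<Longrightarrow> i \<noteq> j \<Longrightarrow> P i \<inter> P j = {}"
    and X: "finite X" "card X \<le> 2 * max_degree V E"
  shows "haxell_condition E (\<lambda>i. P i - X) I"
  unfolding haxell_condition_def
proof (intro allI impI)
  fix S :: "nat set" and D :: "'a set"
  assume S: "S \<subseteq> I" "S \<noteq> {}" and D: "finite D" "card D + 2 \<le> 2 * card S"
  define \<Delta> where "\<Delta> = max_degree V E"
  have "finite S" using D(2) card.infinite by fastforce
  have finite_P: "\<And>i. i \<in> S \<Longrightarrow> finite (P i)" using large S(1) card.infinite by fastforce
  have "card S * Suc (2 * \<Delta>) \<le> (\<Sum>i\<in>S. card (P i))"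
    using sum_bounded_below[of S "Suc (2 * \<Delta>)" "\<lambda>i. card (P i)"] large S(1)
    unfolding \<Delta>_def by (simp add: Suc_le_eq subset_iff)
  also have "\<dots> = card (\<Union>i\<in>S. P i)"
    using \<open>finite S\<close> finite_P disj S(1) by (intro card_UN_disjoint[symmetric]) auto
  also have "\<dots> \<le> card ((\<Union>i\<in>S. P i) - X) + 2 * \<Delta>"
    using diff_card_le_card_Diff[OF X(1), of "\<Union>i\<in>S. P i"] X(2) unfolding \<Delta>_def by linarith
  finally have union: "card S * Suc (2 * \<Delta>) \<le> card (\<Union>i\<in>S. P i - X) + 2 * \<Delta>" by simp
  have "card D * \<Delta> + 2 * \<Delta> \<le> 2 * card S * \<Delta>"
    using mult_le_mono1[OF D(2), of \<Delta>] by (simp add: algebra_simps)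
  moreover have "card S > 0" using S(2) \<open>finite S\<close> by (simp add: card_gt_0_iff)
  ultimately have "card D * \<Delta> < card (\<Union>i\<in>S. P i - X)"
    using union by (simp add: algebra_simps)
  then show "\<exists>x\<in>(\<Union>i\<in>S. P i - X). \<forall>d\<in>D. \<not> E x d"
    using exists_non_neighbour[OF G D(1)] unfolding \<Delta>_def by blast
qed

lemma indep_transversal_avoiding:
  fixes E :: "'a \<Rightarrow> 'a \<Rightarrow> bool"
  assumes G: "graph V E" and "finite I" and large: "\<forall>i\<in>I. 2 * max_degree V E < card (P i)"
    and disj: "\<And>i j. i \<in> I \<Longrightarrow> j \<in> I \<Longrightarrow> i \<noteq> j \<Longrightarrow> P i \<inter> P j = {}"
    and X: "finite X" "card X \<le> 2 * max_degree V E"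
  obtains T where "indep_transversal E P I T" "T \<inter> X = {}"
proof -
  have sym: "\<And>u w. E u w \<Longrightarrow> E w u" and irrefl: "\<And>u. \<not> E u u"
    using G unfolding graph_def by blast+
  have "\<exists>T. indep_transversal E (\<lambda>i. P i - X) I T"
  proof (rule haxell_indep_transversal)
    show "finite (P i - X)" if "i \<in> I" for i
      using large that card.infinite by fastforce
    show "(P i - X) \<inter> (P j - X) = {}" if "i \<in> I" "j \<in> I" "i \<noteq> j" for i j
      using disj[OF that] by blast
    show "haxell_condition E (\<lambda>i. P i - X) I"
      by (rule haxell_condition_large_parts[OF G large disj X])
  qed (use sym irrefl \<open>finite I\<close> in auto)
  then obtain T where T: "indep_transversal E (\<lambda>i. P i - X) I T" ..
  have "transversal P I T"
  proof (rule transversal_enlarge_parts)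
    show "transversal (\<lambda>i. P i - X) I T" using T by (simp add: indep_transversal_def)
  qed (use disj in auto)
  moreover have "T \<inter> X = {}"
    using T unfolding indep_transversal_def transversal_def by blast
  ultimately show ?thesis
    using that T unfolding indep_transversal_def by blast
qed

theorem lemma2p1:
  fixes V :: "'a set" and E :: "'a \<Rightarrow> 'a \<Rightarrow> bool" and P :: "nat \<Rightarrow> 'a set" and k :: nat
  assumes "graph V E"
    and "k \<ge> 1"
    and "is_partition V P k"
    and "\<forall>i\<in>{1..<k}. card (P i) > 2 * max_degree V E"
    and "v \<in> P k" and "v' \<in> P k"
  shows "\<exists>T. indep_transversal E P {1..<k} T
           \<and> indep_transversal E P {1..k} (T \<union> {v})
           \<and> indep_transversal E P {1..k} (T \<union> {v'})"
proof -
  have sym: "\<And>u w. E u w \<Longrightarrow> E w u" and irrefl: "\<And>u. \<not> E u u"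
    and edges_V: "\<And>u w. E u w \<Longrightarrow> w \<in> V" and "finite V"
    using assms(1) unfolding graph_def by blast+
  have disj: "\<And>i j. i \<in> {1..k} \<Longrightarrow> j \<in> {1..k} \<Longrightarrow> i \<noteq> j \<Longrightarrow> P i \<inter> P j = {}"
    using assms(3) unfolding is_partition_def by blast
  define X where "X = {u \<in> V. E v u} \<union> {u \<in> V. E v' u}"
  have "finite X" unfolding X_def using \<open>finite V\<close> by simp
  moreover have "card X \<le> 2 * max_degree V E"
    unfolding X_def by (rule card_two_neighbourhoods_le[OF assms(1)])
  moreover have "\<And>i j. i \<in> {1..<k} \<Longrightarrow> j \<in> {1..<k} \<Longrightarrow> i \<noteq> j \<Longrightarrow> P i \<inter> P j = {}"
    by (rule disj) auto
  ultimately obtain T where T: "indep_transversal E P {1..<k} T" and "T \<inter> X = {}"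
    using indep_transversal_avoiding[OF assms(1) finite_atLeastLessThan assms(4) _ \<open>finite X\<close>]
    by blast
  then have free: "\<forall>u\<in>T. \<not> E v u" "\<forall>u\<in>T. \<not> E v' u"
    unfolding X_def using edges_V by blast+
  have "indep_transversal E P {1..k} (T \<union> {w})" if "w \<in> P k" "\<forall>u\<in>T. \<not> E w u" for w
  proof -
    have "P k \<inter> P i = {}" if "i \<in> {1..<k}" for i by (rule disj) (use that assms(2) in auto)
    then have "indep_transversal E P (insert k {1..<k}) (insert w T)"
      using indep_transversal_insert[OF sym irrefl T that] by blast
    moreover have "insert k {1..<k} = {1..k}" using assms(2) by auto
    ultimately show ?thesis by simp
  qed
  then show ?thesis using T free assms(5,6) by blast
qed

end
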